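(* Let $d>7$ be a positive integer with $\gcd(d,105)=1$, and let $n$ be a positive integer. Then the number of primes in the set $\{d+1,\,2d+1,\,3d+1,\,\ldots,\,nd+1\}$ is at most $0.46n+7$. *)

theory Defs
  imports Complex_Main "HOL-Computational_Algebra.Primes"
begin

end

theory Submission
  imports Defs "HOL-Number_Theory.Cong"
begin

text \<open>A prime \<open>k d + 1 > 7\<close> is divisible by none of 3, 5, 7. As \<open>d\<close> is coprime to each
  modulus \<open>m\<close>, the condition \<open>m dvd k d + 1\<close> singles out one residue class of \<open>k\<close> modulo
  \<open>m\<close>, which meets \<open>{1..n}\<close> in \<open>n / m\<close> elements up to an error below 1. Inclusion-exclusion
  over the seven products of 3, 5, 7 leaves fewer than \<open>n (2/3) (4/5) (6/7) + 7 = 48 n / 105 + 7\<close>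
  admissible \<open>k\<close>, and \<open>48 / 105 < 0.46\<close>.\<close>

lemma dvd_mult_add_one_iff_dvd_add:
  fixes d m :: nat
  assumes "coprime d m"
  obtains s where "\<And>k. m dvd k * d + 1 \<longleftrightarrow> m dvd k + s"
proof -
  obtain e where e: "[d * e = 1] (mod m)"
    using cong_solve_coprime_nat [OF assms] by auto
  have "m dvd k * d + 1 \<longleftrightarrow> m dvd k + e" for k
  proof -
    have "[k * d + 1 = (k + e) * d] (mod m)"
      using cong_add [OF cong_refl [of "k * d"] e] by (simp add: cong_sym algebra_simps)
    then have "m dvd k * d + 1 \<longleftrightarrow> m dvd (k + e) * d"
      by (rule cong_dvd_iff)
    also have "\<dots> \<longleftrightarrow> m dvd k + e"
      using assms by (simp add: coprime_dvd_mult_left_iff coprime_commute)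
    finally show ?thesis .
  qed
  then show thesis by (rule that)
qed

lemma card_atLeastAtMost_dvd_add:
  fixes m n s :: nat
  shows "card {k \<in> {1..n}. m dvd k + s} = (n + s) div m - s div m"
proof (induction n)
  case 0
  then show ?case by simp
next
  case (Suc n)
  let ?S = "\<lambda>n. {k \<in> {1..n}. m dvd k + s}"
  have step: "(Suc n + s) div m = (n + s) div m + (if m dvd Suc n + s then 1 else 0)"
    using div_Suc [of "n + s" m] by (auto simp: dvd_eq_mod_eq_0)
  have mono: "s div m \<le> (n + s) div m"
    by (simp add: div_le_mono)
  show ?case
  proof (cases "m dvd Suc n + s")
    case True
    then have "?S (Suc n) = insert (Suc n) (?S n)"
      by (auto simp: le_Suc_eq)
    then show ?thesis
      using Suc.IH True step mono by simp
  next
    case False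
    then have "?S (Suc n) = ?S n"
      by (auto simp: le_Suc_eq)
    then show ?thesis
      using Suc.IH False step by simp
  qed
qed

text \<open>No hypothesis on \<open>m\<close> is needed: for \<open>m = 0\<close> the count and \<open>n / 0\<close> both vanish.\<close>

lemma card_atLeastAtMost_dvd_add_approx:
  fixes m n s :: nat
  shows "\<bar>real (card {k \<in> {1..n}. m dvd k + s}) - real n / real m\<bar> < 1"
proof (cases "m = 0")
  case True
  then show ?thesis by simp
next
  case False
  have mono: "s div m \<le> (n + s) div m"
    by (simp add: div_le_mono)
  have "real m * real ((n + s) div m) + real ((n + s) mod m) = real n + real s"
       "real m * real (s div m) + real (s mod m) = real s"
    by (simp_all flip: of_nat_mult of_nat_add)
  moreover have "real ((n + s) mod m) < m" "real (s mod m) < m"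
    using False by simp_all
  moreover have "real m * real ((n + s) div m - s div m)
      = real m * real ((n + s) div m) - real m * real (s div m)"
    using mono by (simp add: of_nat_diff right_diff_distrib)
  ultimately have "\<bar>real m * real ((n + s) div m - s div m) - real n\<bar> < m"
    unfolding abs_less_iff by linarith
  then show ?thesis
    unfolding card_atLeastAtMost_dvd_add using False by (simp add: abs_less_iff field_simps)
qed

lemma card_atLeastAtMost_dvd_mult_add_one_approx:
  fixes d m n :: nat
  assumes "coprime d m"
  shows "\<bar>real (card {k \<in> {1..n}. m dvd k * d + 1}) - real n / real m\<bar> < 1"
proof -
  obtain s where "\<And>k. m dvd k * d + 1 \<longleftrightarrow> m dvd k + s"
    using dvd_mult_add_one_iff_dvd_add [OF assms] by blast
  then show ?thesis
    using card_atLeastAtMost_dvd_add_approx [where m = m and s = s and n = n] by simp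
qed

lemma card_Diff_Un3:
  assumes "finite U" "A \<subseteq> U" "B \<subseteq> U" "C \<subseteq> U"
  shows "int (card (U - (A \<union> B \<union> C))) = int (card U) - card A - card B - card C
           + card (A \<inter> B) + card (A \<inter> C) + card (B \<inter> C) - card (A \<inter> B \<inter> C)"
proof -
  have fin: "finite A" "finite B" "finite C"
    using assms by (metis finite_subset)+
  have "card A + card B = card (A \<union> B) + card (A \<inter> B)"
    using fin by (intro card_Un_Int)
  moreover have "card (A \<union> B) + card C = card (A \<union> B \<union> C) + card ((A \<inter> C) \<union> (B \<inter> C))"
    using card_Un_Int [of "A \<union> B" C] fin by (simp add: Int_Un_distrib2)
  moreover have "card (A \<inter> C) + card (B \<inter> C) = card ((A \<inter> C) \<union> (B \<inter> C)) + card (A \<inter> B \<inter> C)"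
    using card_Un_Int [of "A \<inter> C" "B \<inter> C"] fin by (simp add: Int_ac)
  moreover have "card U = card (A \<union> B \<union> C) + card (U - (A \<union> B \<union> C))"
    using card_Int_Diff [OF assms(1), of "A \<union> B \<union> C"] assms by (simp add: Int_absorb1)
  ultimately show ?thesis
    by linarith
qed

lemma card_sieve_three_moduli:
  fixes a b c d n :: nat
  assumes "coprime a b" "coprime a c" "coprime b c"
    and "coprime d a" "coprime d b" "coprime d c"
  shows "real (card {k \<in> {1..n}. \<not> a dvd k * d + 1 \<and> \<not> b dvd k * d + 1 \<and> \<not> c dvd k * d + 1})
           < real n * (1 - 1 / a) * (1 - 1 / b) * (1 - 1 / c) + 7"
proof -
  define S where "S m = {k \<in> {1..n}. m dvd k * d + 1}" for m
  have approx: "\<bar>real (card (S m)) - real n / real m\<bar> < 1" if "coprime d m" for m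
    unfolding S_def using that by (rule card_atLeastAtMost_dvd_mult_add_one_approx)
  have Int_S: "S x \<inter> S y = S (x * y)" if "coprime x y" for x y
    unfolding S_def using that by (auto intro: divides_mult dest: dvd_mult_left dvd_mult_right)
  have "{k \<in> {1..n}. \<not> a dvd k * d + 1 \<and> \<not> b dvd k * d + 1 \<and> \<not> c dvd k * d + 1}
      = {1..n} - (S a \<union> S b \<union> S c)"
    by (auto simp: S_def)
  moreover have "S a \<inter> S b = S (a * b)" "S a \<inter> S c = S (a * c)" "S b \<inter> S c = S (b * c)"
      "S a \<inter> S b \<inter> S c = S (a * b * c)"
    using assms by (simp_all add: Int_S)
  moreover have "S m \<subseteq> {1..n}" for m
    by (auto simp: S_def)
  ultimately have "int (card {k \<in> {1..n}. \<not> a dvd k * d + 1 \<and> \<not> b dvd k * d + 1 \<and> \<not> c dvd k * d + 1})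
      = int n - card (S a) - card (S b) - card (S c)
        + card (S (a * b)) + card (S (a * c)) + card (S (b * c)) - card (S (a * b * c))"
    using card_Diff_Un3 [of "{1..n}" "S a" "S b" "S c"] by simp
  moreover have "real n * (1 - 1 / a) * (1 - 1 / b) * (1 - 1 / c)
      = n - n / a - n / b - n / c + n / (a * b) + n / (a * c) + n / (b * c) - n / (a * b * c)"
    by (simp add: algebra_simps divide_inverse)
  ultimately show ?thesis
    using approx [of a] approx [of b] approx [of c] approx [of "a * b"] approx [of "a * c"]
      approx [of "b * c"] approx [of "a * b * c"] assms
    unfolding abs_less_iff by simp
qed

theorem lemma5p2:
  fixes d n :: nat
  assumes "d > 7" and "gcd d 105 = 1" and "n > 0"
  shows "real (card {p. prime p \<and> p \<in> (\<lambda>k. k * d + 1) ` {1..n}}) \<le> 0.46 * real n + 7"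
proof -
  define K where "K = {k \<in> {1..n}. \<not> 3 dvd k * d + 1 \<and> \<not> 5 dvd k * d + 1 \<and> \<not> 7 dvd k * d + 1}"
  have "{p. prime p \<and> p \<in> (\<lambda>k. k * d + 1) ` {1..n}} \<subseteq> (\<lambda>k. k * d + 1) ` K"
  proof clarify
    fix k assume k: "k \<in> {1..n}" and prime: "prime (k * d + 1)"
    have "d \<le> k * d"
      using k by simp
    then have "k * d + 1 > 7"
      using assms(1) by linarith
    with k show "k * d + 1 \<in> (\<lambda>k. k * d + 1) ` K"
      unfolding K_def using prime_nat_not_dvd [OF prime] by auto
  qed
  then have "card {p. prime p \<and> p \<in> (\<lambda>k. k * d + 1) ` {1..n}} \<le> card ((\<lambda>k. k * d + 1) ` K)"
    by (rule card_mono [rotated]) (simp add: K_def)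
  also have "\<dots> \<le> card K"
    by (rule card_image_le) (simp add: K_def)
  finally have primes_le: "card {p. prime p \<and> p \<in> (\<lambda>k. k * d + 1) ` {1..n}} \<le> card K" .
  have "coprime d (3 * 5 * 7)"
    using assms(2) by (simp add: coprime_iff_gcd_eq_1)
  then have "coprime d 3" "coprime d 5" "coprime d 7"
    unfolding coprime_mult_right_iff by blast+
  moreover have "coprime (3 :: nat) 5" "coprime (3 :: nat) 7" "coprime (5 :: nat) 7"
    by (simp_all add: coprime_iff_gcd_eq_1 gcd_non_0_nat)
  ultimately have "real (card K) < real n * (1 - 1 / 3) * (1 - 1 / 5) * (1 - 1 / 7) + 7"
    unfolding K_def using card_sieve_three_moduli [of 3 5 7 d n] by simp
  with primes_le show ?thesis
    by simp
qed

end
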